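(* Let $\mathcal{R},\mathcal{R}'$ be finite sets with $|\mathcal{R}|=|\mathcal{R}'|$, let $\mathcal{A}$ be a finite set of attributes, for each $a\in\mathcal{A}$ let $\mathcal{V}_a=\mathcal{V}'_a$ be a finite set and $A_a$ a transition probability matrix on $\mathcal{V}_a$ with positive entries, and let $\mathcal{V}=\mathcal{V}'=\prod_{a\in\mathcal{A}}\mathcal{V}_a$. Then the PRAM mechanism with per-attribute transition matrices $A_a$ is a $Pk$-anonymization for $$k=1+(|\mathcal{R}|-1)\prod_{a\in\mathcal{A}}\mathrm{AR}_a,\qquad \mathrm{AR}_a=\min_{u,v\in\mathcal{V}_a,\ u',v'\in\mathcal{V}'_a}\frac{(A_a)_{u,v'}(A_a)_{v,u'}}{(A_a)_{u,u'}(A_a)_{v,v'}}.$$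
   Context: A table on $(\mathcal{R},\mathcal{V})$ is a map $\mathcal{R}\to\mathcal{V}$; $\mathcal{T}$, $\mathcal{T}'$ denote the sets of tables on $(\mathcal{R},\mathcal{V})$ and $(\mathcal{R}',\mathcal{V}')$. For sets $X,Y$, $X\to Y$ is the set of maps $X\to Y$. A privacy mechanism is $(\mathcal{R},\mathcal{V},\mathcal{R}',\mathcal{V}',\Pi,\Delta)$ with $\Pi$ uniformly distributed over bijections $\mathcal{R}\to\mathcal{R}'$ and $\Delta$ a random variable in $\mathcal{T}\to(\mathcal{R}\to\mathcal{V}')$; it is a privacy mechanism from $T$ to $T'$ if $T,\Pi,\Delta$ are mutually independent and $\Delta(T)=T'\circ\Pi$. A transition probability matrix has nonnegative entries and rows summing to 1. The PRAM mechanism with per-attribute matrices $A_a$: for every $\tau\in\mathcal{T}$, the values $(\Delta(\tau))(r)$, $r\in\mathcal{R}$, are independent and $\Pr[(\Delta(\tau))(r)=v']=\prod_{a\in\mathcal{A}}(A_a)_{\tau(r)_a,v'_a}$, where $w_a$ denotes the $a$-component of $w\in\prod_a\mathcal{V}_a$. $(\Delta,\tau')$ is $Pk$-anonymous if for all random variables $T,T'$ such that $\Delta$ is a privacy mechanism from $T$ to $T'$ and all $r\in\mathcal{R},r'\in\mathcal{R}'$, $\Pr[\Pi(r)=r'\mid T'=\tau']\le1/k$; $\Delta$ is a $Pk$-anonymization if $(\Delta,\tau')$ is $Pk$-anonymous for every $\tau'\in\mathcal{T}'$ for which some $\tau\in\mathcal{T}$ has $\Pr[\Delta(\tau)=\tau'\circ\Pi]\ne0$.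 *)

theory Defs
  imports "HOL-Probability.Probability"
begin

definition tables :: "'r set \<Rightarrow> 'a set \<Rightarrow> ('a \<Rightarrow> 'v set) \<Rightarrow> ('r \<Rightarrow> 'a \<Rightarrow> 'v) set" where
  "tables R A Vs = (R \<rightarrow>\<^sub>E PiE A Vs)"

definition bijections :: "'r set \<Rightarrow> 'r2 set \<Rightarrow> ('r \<Rightarrow> 'r2) set" where
  "bijections R R' = {\<pi> \<in> R \<rightarrow>\<^sub>E R'. bij_betw \<pi> R R'}"

definition positive_transition_matrix :: "'v set \<Rightarrow> ('v \<Rightarrow> 'v \<Rightarrow> real) \<Rightarrow> bool" where
  "positive_transition_matrix V M \<longleftrightarrow>
     (\<forall>u\<in>V. \<forall>v\<in>V. M u v > 0) \<and> (\<forall>u\<in>V. (\<Sum>v\<in>V. M u v) = 1)"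

text \<open>A mechanism is given by the joint law Q of (Pi, Delta); Delta maps tables to maps R -> V'.\<close>
type_synonym ('r,'r2,'a,'v) mech =
  "(('r \<Rightarrow> 'r2) \<times> (('r \<Rightarrow> 'a \<Rightarrow> 'v) \<Rightarrow> ('r \<Rightarrow> 'a \<Rightarrow> 'v))) pmf"

definition uniform_Pi :: "'r set \<Rightarrow> 'r2 set \<Rightarrow> ('r,'r2,'a,'v) mech \<Rightarrow> bool" where
  "uniform_Pi R R' Q \<longleftrightarrow> map_pmf fst Q = pmf_of_set (bijections R R')"

definition is_PRAM :: "'r set \<Rightarrow> 'a set \<Rightarrow> ('a \<Rightarrow> 'v set) \<Rightarrow> ('a \<Rightarrow> 'v \<Rightarrow> 'v \<Rightarrow> real)
    \<Rightarrow> ('r,'r2,'a,'v) mech \<Rightarrow> bool" where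
  "is_PRAM R A Vs M Q \<longleftrightarrow>
     (\<forall>\<tau>\<in>tables R A Vs.
        prob_space.indep_vars (measure_pmf Q) (\<lambda>_. count_space UNIV) (\<lambda>r x. (snd x) \<tau> r) R \<and>
        (\<forall>r\<in>R. \<forall>v'\<in>PiE A Vs.
           measure_pmf.prob Q {x. (snd x) \<tau> r = v'} = (\<Prod>a\<in>A. M a (\<tau> r a) (v' a))))"

text \<open>Joint law P of (T, (Pi, Delta), T') such that the mechanism (law Q of (Pi,Delta))
  is a privacy mechanism from T to T'.\<close>
definition privacy_mechanism_from ::
  "'r set \<Rightarrow> 'r2 set \<Rightarrow> 'a set \<Rightarrow> ('a \<Rightarrow> 'v set) \<Rightarrow> ('r,'r2,'a,'v) mech
   \<Rightarrow> (('r \<Rightarrow> 'a \<Rightarrow> 'v) \<times> (('r \<Rightarrow> 'r2) \<times> (('r \<Rightarrow> 'a \<Rightarrow> 'v) \<Rightarrow> ('r \<Rightarrow> 'a \<Rightarrow> 'v))) \<times> ('r2 \<Rightarrow> 'a \<Rightarrow> 'v)) pmf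
   \<Rightarrow> bool" where
  "privacy_mechanism_from R R' A Vs Q P \<longleftrightarrow>
     map_pmf (\<lambda>(t, m, t'). m) P = Q \<and>
     (\<forall>X Y Z. measure_pmf.prob P {(t, (\<pi>, \<delta>), t'). t \<in> X \<and> \<pi> \<in> Y \<and> \<delta> \<in> Z}
        = measure_pmf.prob P {(t, (\<pi>, \<delta>), t'). t \<in> X}
          * measure_pmf.prob P {(t, (\<pi>, \<delta>), t'). \<pi> \<in> Y}
          * measure_pmf.prob P {(t, (\<pi>, \<delta>), t'). \<delta> \<in> Z}) \<and>
     (\<forall>(t, (\<pi>, \<delta>), t') \<in> set_pmf P.
        t \<in> tables R A Vs \<and> t' \<in> tables R' A Vs \<and> (\<forall>r\<in>R. \<delta> t r = t' (\<pi> r)))"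

definition cond_prob_pmf :: "'x pmf \<Rightarrow> 'x set \<Rightarrow> 'x set \<Rightarrow> real" where
  "cond_prob_pmf P E F = measure_pmf.prob P (E \<inter> F) / measure_pmf.prob P F"

definition Pk_anonymous ::
  "'r set \<Rightarrow> 'r2 set \<Rightarrow> 'a set \<Rightarrow> ('a \<Rightarrow> 'v set) \<Rightarrow> ('r,'r2,'a,'v) mech
   \<Rightarrow> ('r2 \<Rightarrow> 'a \<Rightarrow> 'v) \<Rightarrow> real \<Rightarrow> bool" where
  "Pk_anonymous R R' A Vs Q \<tau>' k \<longleftrightarrow>
     (\<forall>P. privacy_mechanism_from R R' A Vs Q P \<longrightarrow>
        (\<forall>r\<in>R. \<forall>r'\<in>R'.
           cond_prob_pmf P {(t, (\<pi>, \<delta>), t'). \<pi> r = r'} {(t, (\<pi>, \<delta>), t'). t' = \<tau>'} \<le> 1 / k))"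

definition Pk_anonymization ::
  "'r set \<Rightarrow> 'r2 set \<Rightarrow> 'a set \<Rightarrow> ('a \<Rightarrow> 'v set) \<Rightarrow> ('r,'r2,'a,'v) mech \<Rightarrow> real \<Rightarrow> bool" where
  "Pk_anonymization R R' A Vs Q k \<longleftrightarrow>
     (\<forall>\<tau>'\<in>tables R' A Vs.
        (\<exists>\<tau>\<in>tables R A Vs. measure_pmf.prob Q {(\<pi>, \<delta>). \<forall>r\<in>R. \<delta> \<tau> r = \<tau>' (\<pi> r)} \<noteq> 0)
        \<longrightarrow> Pk_anonymous R R' A Vs Q \<tau>' k)"

definition AR :: "'v set \<Rightarrow> ('v \<Rightarrow> 'v \<Rightarrow> real) \<Rightarrow> real" where
  "AR V M = Min {M u v' * M v u' / (M u u' * M v v') | u v u' v'.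
                   u \<in> V \<and> v \<in> V \<and> u' \<in> V \<and> v' \<in> V}"

end

theory Submission
  imports Defs "HOL-Combinatorics.Transposition"
begin

text \<open>Given T = \<tau>, the posterior weight of a bijection \<pi> is proportional to the PRAM
  likelihood \<Prod>s \<Prod>a M a (\<tau> s a) (\<tau>' (\<pi> s) a). Composing a bijection with \<pi> r = r' with a
  transposition (r s), s \<noteq> r, yields |R| - 1 distinct bijections not sending r to r', and by the
  definition of AR each of them has likelihood at least (\<Prod>a AR a) times that of \<pi>. So for every
  \<tau> the bijections with \<pi> r = r' carry at most a fraction 1/k of the total likelihood, and
  averaging over \<tau> (T, \<Pi>, \<Delta> are independent and \<Pi> is uniform) bounds
  Pr[\<Pi> r = r' | T' = \<tau>'] by 1/k.\<close>

lemma finite_bijections: "finite R \<Longrightarrow> finite R' \<Longrightarrow> finite (bijections R R')"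
  unfolding bijections_def by (rule finite_subset[OF _ finite_PiE]) auto

lemma bijections_nonempty:
  assumes "finite R" "finite R'" "card R = card R'"
  shows "bijections R R' \<noteq> {}"
proof -
  obtain h where "bij_betw h R R'" using finite_same_card_bij[OF assms] by blast
  then have "restrict h R \<in> bijections R R'"
    unfolding bijections_def by (auto simp: bij_betw_def inj_on_def)
  then show ?thesis by blast
qed

lemma finite_tables:
  "finite R \<Longrightarrow> finite A \<Longrightarrow> \<forall>a\<in>A. finite (Vs a) \<Longrightarrow> finite (tables R A Vs)"
  unfolding tables_def by (intro finite_PiE) auto

lemma tables_eq_iff_comp_bijection:
  assumes "t' \<in> tables R' A Vs" "\<tau>' \<in> tables R' A Vs" "\<pi> \<in> bijections R R'"
  shows "t' = \<tau>' \<longleftrightarrow> (\<forall>s\<in>R. t' (\<pi> s) = \<tau>' (\<pi> s))"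
proof
  assume "\<forall>s\<in>R. t' (\<pi> s) = \<tau>' (\<pi> s)"
  moreover have "\<pi> ` R = R'"
    using assms(3) unfolding bijections_def bij_betw_def by blast
  ultimately show "t' = \<tau>'"
    using assms(1,2) unfolding tables_def by (intro extensionalityI[of _ R']) (auto simp: PiE_def)
qed simp

lemma comp_transpose_in_bijections:
  assumes "\<pi> \<in> bijections R R'" "r \<in> R" "s \<in> R"
  shows "\<pi> \<circ> Transposition.transpose r s \<in> bijections R R'"
proof -
  have "bij_betw (\<pi> \<circ> Transposition.transpose r s) R R'"
    using assms by (intro bij_betw_trans[of _ R]) (auto simp: bijections_def)
  moreover have "\<pi> \<circ> Transposition.transpose r s \<in> R \<rightarrow>\<^sub>E R'"
    using assms by (auto simp: bijections_def PiE_def extensional_def Transposition.transpose_def)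
  ultimately show ?thesis unfolding bijections_def by blast
qed

lemma prod_comp_transpose_ge:
  fixes f :: "'r \<Rightarrow> 'r2 \<Rightarrow> real"
  assumes "finite R" "r \<in> R" "s \<in> R" "s \<noteq> r"
    and nonneg: "\<forall>x\<in>R. 0 \<le> f x (\<pi> x)"
    and swap: "c * (f r (\<pi> r) * f s (\<pi> s)) \<le> f r (\<pi> s) * f s (\<pi> r)"
  shows "c * (\<Prod>x\<in>R. f x (\<pi> x)) \<le> (\<Prod>x\<in>R. f x (\<pi> (Transposition.transpose r s x)))"
proof -
  have split: "(\<Prod>x\<in>R. h x) = h r * h s * (\<Prod>x\<in>R - {r} - {s}. h x)" for h :: "'r \<Rightarrow> real"
    using assms by (simp add: prod.remove[of R r] prod.remove[of "R - {r}" s] mult.assoc)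
  have rest: "(\<Prod>x\<in>R - {r} - {s}. f x (\<pi> (Transposition.transpose r s x)))
      = (\<Prod>x\<in>R - {r} - {s}. f x (\<pi> x))"
    by (intro prod.cong) auto
  have "c * (\<Prod>x\<in>R. f x (\<pi> x)) = c * (f r (\<pi> r) * f s (\<pi> s)) * (\<Prod>x\<in>R - {r} - {s}. f x (\<pi> x))"
    by (simp add: split[of "\<lambda>x. f x (\<pi> x)"] mult.assoc)
  also have "\<dots> \<le> f r (\<pi> s) * f s (\<pi> r) * (\<Prod>x\<in>R - {r} - {s}. f x (\<pi> x))"
    using swap nonneg by (intro mult_right_mono prod_nonneg) auto
  also have "\<dots> = (\<Prod>x\<in>R. f x (\<pi> (Transposition.transpose r s x)))"
    using rest unfolding split[of "\<lambda>x. f x (\<pi> (Transposition.transpose r s x))"] by simp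
  finally show ?thesis .
qed

lemma sum_prod_bijections_mapping_le:
  fixes f :: "'r \<Rightarrow> 'r2 \<Rightarrow> real"
  assumes "finite R" "finite R'" "r \<in> R"
    and nonneg: "\<forall>x\<in>R. \<forall>y\<in>R'. 0 \<le> f x y"
    and swap: "\<forall>s\<in>R. \<forall>u\<in>R'. \<forall>v\<in>R'. c * (f r u * f s v) \<le> f r v * f s u"
  shows "(1 + (real (card R) - 1) * c) * (\<Sum>\<pi>\<in>{\<pi>\<in>bijections R R'. \<pi> r = r'}. \<Prod>x\<in>R. f x (\<pi> x))
          \<le> (\<Sum>\<pi>\<in>bijections R R'. \<Prod>x\<in>R. f x (\<pi> x))"
proof -
  define B where "B = bijections R R'"
  define E where "E = {\<pi>\<in>B. \<pi> r = r'}"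
  define w where "w = (\<lambda>\<pi>. \<Prod>x\<in>R. f x (\<pi> x))"
  define g where "g = (\<lambda>(\<pi> :: 'r \<Rightarrow> 'r2, s). \<pi> \<circ> Transposition.transpose r s)"
  have finite_B: "finite B" and "E \<subseteq> B"
    using assms finite_bijections unfolding B_def E_def by auto
  have in_R': "\<pi> x \<in> R'" if "\<pi> \<in> B" "x \<in> R" for \<pi> x
    using that unfolding B_def bijections_def by auto
  have g_maps: "g (\<pi>, s) \<in> B - E" if "\<pi> \<in> E" "s \<in> R - {r}" for \<pi> s
  proof -
    have "\<pi> \<in> B" "\<pi> r = r'" "s \<in> R" "s \<noteq> r" using that by (auto simp: E_def)
    moreover from this have "\<pi> s \<noteq> \<pi> r"
      using \<open>r \<in> R\<close> by (auto simp: B_def bijections_def bij_betw_def dest: inj_onD)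
    ultimately show ?thesis
      using comp_transpose_in_bijections[of \<pi> R R' r s] \<open>r \<in> R\<close> by (simp add: g_def E_def B_def)
  qed
  have "inj_on g (E \<times> (R - {r}))"
  proof (rule inj_onI)
    fix p q assume "p \<in> E \<times> (R - {r})" "q \<in> E \<times> (R - {r})" "g p = g q"
    then obtain \<pi>1 s1 \<pi>2 s2 where pq: "p = (\<pi>1, s1)" "q = (\<pi>2, s2)"
      and in_E: "\<pi>1 \<in> E" "\<pi>2 \<in> E" and "s1 \<in> R - {r}" "s2 \<in> R - {r}"
      and eq: "g (\<pi>1, s1) = g (\<pi>2, s2)" by auto
    have "g (\<pi>1, s1) s1 = r'" "g (\<pi>2, s2) s2 = r'"
      using in_E by (simp_all add: g_def E_def)
    then have "g (\<pi>1, s1) s1 = g (\<pi>1, s1) s2" "g (\<pi>1, s1) \<in> B"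
      using eq g_maps[OF in_E(1) \<open>s1 \<in> R - {r}\<close>] by auto
    then have "s1 = s2"
      using \<open>s1 \<in> R - {r}\<close> \<open>s2 \<in> R - {r}\<close> by (auto simp: B_def bijections_def bij_betw_def inj_on_def)
    moreover have "\<pi> = g (\<pi>, s) \<circ> Transposition.transpose r s" for \<pi> s
      by (auto simp: g_def fun_eq_iff)
    ultimately show "p = q" using eq pq by metis
  qed
  have "real (card (R - {r})) = real (card R) - 1"
    by (simp add: card_Suc_Diff1[symmetric, OF \<open>finite R\<close> \<open>r \<in> R\<close>])
  then have "(real (card R) - 1) * c * sum w E = (\<Sum>\<pi>\<in>E. \<Sum>s\<in>R - {r}. c * w \<pi>)"
    by (simp add: sum_distrib_left sum_distrib_right mult_ac)
  also have "\<dots> \<le> (\<Sum>\<pi>\<in>E. \<Sum>s\<in>R - {r}. w (g (\<pi>, s)))"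
    using \<open>E \<subseteq> B\<close> nonneg swap in_R' \<open>finite R\<close> \<open>r \<in> R\<close>
    by (intro sum_mono) (auto simp: w_def g_def E_def intro!: prod_comp_transpose_ge)
  also have "\<dots> = sum w (g ` (E \<times> (R - {r})))"
    by (simp add: sum.cartesian_product sum.reindex[OF \<open>inj_on g _\<close>])
  also have "\<dots> \<le> sum w (B - E)"
    using g_maps finite_B nonneg in_R' unfolding w_def
    by (intro sum_mono2 prod_nonneg) auto
  finally have "(real (card R) - 1) * c * sum w E \<le> sum w (B - E)" .
  moreover have "sum w B = sum w E + sum w (B - E)"
    using finite_B \<open>E \<subseteq> B\<close> by (metis add.commute sum.subset_diff)
  ultimately show ?thesis
    unfolding B_def[symmetric] E_def[symmetric] w_def[symmetric] by (simp add: algebra_simps)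
qed

lemma AR_eq_Min_image:
  "AR V M = Min ((\<lambda>(u, v, u', v'). M u v' * M v u' / (M u u' * M v v')) ` (V \<times> V \<times> V \<times> V))"
  unfolding AR_def by (rule arg_cong[where f = Min]) force

lemma AR_mult_le:
  assumes "finite V" "\<forall>u\<in>V. \<forall>v\<in>V. 0 < M u v" "u \<in> V" "v \<in> V" "u' \<in> V" "v' \<in> V"
  shows "AR V M * (M u u' * M v v') \<le> M u v' * M v u'"
proof -
  have "AR V M \<le> M u v' * M v u' / (M u u' * M v v')"
    unfolding AR_eq_Min_image using assms by (intro Min_le) force+
  moreover have "0 < M u u' * M v v'" using assms by simp
  ultimately show ?thesis by (simp add: pos_le_divide_eq)
qed

lemma AR_pos:
  assumes "finite V" "V \<noteq> {}" "\<forall>u\<in>V. \<forall>v\<in>V. 0 < M u v"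
  shows "0 < AR V M"
  unfolding AR_eq_Min_image using assms by (subst Min_gr_iff) auto

lemma prod_AR_mult_le:
  assumes "\<forall>a\<in>A. finite (Vs a)" "\<forall>a\<in>A. \<forall>u\<in>Vs a. \<forall>v\<in>Vs a. 0 < M a u v"
    and "x \<in> PiE A Vs" "y \<in> PiE A Vs" "u \<in> PiE A Vs" "v \<in> PiE A Vs"
  shows "(\<Prod>a\<in>A. AR (Vs a) (M a)) * ((\<Prod>a\<in>A. M a (x a) (u a)) * (\<Prod>a\<in>A. M a (y a) (v a)))
         \<le> (\<Prod>a\<in>A. M a (x a) (v a)) * (\<Prod>a\<in>A. M a (y a) (u a))"
proof -
  have "(\<Prod>a\<in>A. AR (Vs a) (M a) * (M a (x a) (u a) * M a (y a) (v a)))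
        \<le> (\<Prod>a\<in>A. M a (x a) (v a) * M a (y a) (u a))"
  proof (intro prod_mono conjI)
    fix a assume "a \<in> A"
    then have "x a \<in> Vs a" "y a \<in> Vs a" "u a \<in> Vs a" "v a \<in> Vs a"
      using assms(3-6) by auto
    moreover from this \<open>a \<in> A\<close> assms(1,2) have "0 < AR (Vs a) (M a)"
      by (intro AR_pos) auto
    ultimately show "0 \<le> AR (Vs a) (M a) * (M a (x a) (u a) * M a (y a) (v a))"
      using \<open>a \<in> A\<close> assms(2) by (simp add: less_imp_le)
    show "AR (Vs a) (M a) * (M a (x a) (u a) * M a (y a) (v a)) \<le> M a (x a) (v a) * M a (y a) (u a)"
      using \<open>a \<in> A\<close> \<open>x a \<in> Vs a\<close> \<open>y a \<in> Vs a\<close> \<open>u a \<in> Vs a\<close> \<open>v a \<in> Vs a\<close> assms(1,2)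
      by (intro AR_mult_le) auto
  qed
  then show ?thesis by (simp add: prod.distrib)
qed

lemma PRAM_prob_rows:
  assumes "is_PRAM R A Vs M Q" "\<tau> \<in> tables R A Vs" "finite R" "\<forall>s\<in>R. \<sigma> s \<in> PiE A Vs"
  shows "measure_pmf.prob Q {(\<pi>, \<delta>). \<forall>s\<in>R. \<delta> \<tau> s = \<sigma> s} = (\<Prod>s\<in>R. \<Prod>a\<in>A. M a (\<tau> s a) (\<sigma> s a))"
proof (cases "R = {}")
  case False
  have "prob_space.indep_vars (measure_pmf Q) (\<lambda>_. count_space UNIV) (\<lambda>s x. snd x \<tau> s) R"
    and marginal: "\<forall>s\<in>R. \<forall>v'\<in>PiE A Vs.
       measure_pmf.prob Q {x. snd x \<tau> s = v'} = (\<Prod>a\<in>A. M a (\<tau> s a) (v' a))"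
    using assms(1,2) unfolding is_PRAM_def by auto
  then have "measure_pmf.prob Q (\<Inter>s\<in>R. (\<lambda>x. snd x \<tau> s) -` {\<sigma> s} \<inter> space (measure_pmf Q))
      = (\<Prod>s\<in>R. measure_pmf.prob Q ((\<lambda>x. snd x \<tau> s) -` {\<sigma> s} \<inter> space (measure_pmf Q)))"
    using False assms(3)
    by (intro prob_space.indep_varsD[OF prob_space_measure_pmf]) auto
  moreover have "(\<Inter>s\<in>R. (\<lambda>x. snd x \<tau> s) -` {\<sigma> s} \<inter> space (measure_pmf Q)) = {(\<pi>, \<delta>). \<forall>s\<in>R. \<delta> \<tau> s = \<sigma> s}"
    using False by auto
  ultimately show ?thesis
    using marginal assms(4) by (simp add: vimage_def)
qed simp

lemma PRAM_prob_mapping_le: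
  assumes PRAM: "is_PRAM R A Vs M Q" and fin: "finite R" "finite R'" "\<forall>a\<in>A. finite (Vs a)"
    and pos: "\<forall>a\<in>A. positive_transition_matrix (Vs a) (M a)"
    and \<tau>: "\<tau> \<in> tables R A Vs" and \<tau>': "\<tau>' \<in> tables R' A Vs" and "r \<in> R"
  shows "(1 + (real (card R) - 1) * (\<Prod>a\<in>A. AR (Vs a) (M a)))
      * (\<Sum>\<pi>\<in>{\<pi>\<in>bijections R R'. \<pi> r = r'}. measure_pmf.prob Q {(\<pi>', \<delta>). \<forall>s\<in>R. \<delta> \<tau> s = \<tau>' (\<pi> s)})
    \<le> (\<Sum>\<pi>\<in>bijections R R'. measure_pmf.prob Q {(\<pi>', \<delta>). \<forall>s\<in>R. \<delta> \<tau> s = \<tau>' (\<pi> s)})"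
proof -
  define f where "f x y = (\<Prod>a\<in>A. M a (\<tau> x a) (\<tau>' y a))" for x y
  have rows: "\<tau> x \<in> PiE A Vs" if "x \<in> R" for x
    using \<tau> that unfolding tables_def by auto
  have rows': "\<tau>' y \<in> PiE A Vs" if "y \<in> R'" for y
    using \<tau>' that unfolding tables_def by auto
  have pos': "\<forall>a\<in>A. \<forall>u\<in>Vs a. \<forall>v\<in>Vs a. 0 < M a u v"
    using pos unfolding positive_transition_matrix_def by blast
  have prob_eq: "measure_pmf.prob Q {(\<pi>', \<delta>). \<forall>s\<in>R. \<delta> \<tau> s = \<tau>' (\<pi> s)} = (\<Prod>x\<in>R. f x (\<pi> x))"
    if "\<pi> \<in> bijections R R'" for \<pi>
    using that rows' unfolding f_def bijections_def
    by (intro PRAM_prob_rows[OF PRAM \<tau> fin(1)]) auto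
  have "\<forall>x\<in>R. \<forall>y\<in>R'. 0 \<le> f x y"
    using rows rows' pos' unfolding f_def by (intro ballI prod_nonneg) (fastforce intro: less_imp_le)
  moreover have "\<forall>s\<in>R. \<forall>u\<in>R'. \<forall>v\<in>R'. (\<Prod>a\<in>A. AR (Vs a) (M a)) * (f r u * f s v) \<le> f r v * f s u"
    using rows rows' \<open>r \<in> R\<close> unfolding f_def
    by (intro ballI prod_AR_mult_le[OF fin(3) pos']) auto
  ultimately show ?thesis
    using sum_prod_bijections_mapping_le[OF fin(1,2) \<open>r \<in> R\<close>] prob_eq by simp
qed

lemma privacy_mechanism_prob_mech:
  assumes "privacy_mechanism_from R R' A Vs Q P"
  shows "measure_pmf.prob P {(t, (\<pi>, \<delta>), t'). p \<pi> \<delta>} = measure_pmf.prob Q {(\<pi>, \<delta>). p \<pi> \<delta>}"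
proof -
  have "Q = map_pmf (\<lambda>(t, m, t'). m) P"
    using assms unfolding privacy_mechanism_from_def by simp
  then have "measure_pmf.prob Q {(\<pi>, \<delta>). p \<pi> \<delta>}
      = measure_pmf.prob P ((\<lambda>(t, m, t'). m) -` {(\<pi>, \<delta>). p \<pi> \<delta>})"
    by simp
  also have "(\<lambda>(t, m, t'). m) -` {(\<pi>, \<delta>). p \<pi> \<delta>} = {(t, (\<pi>, \<delta>), t'). p \<pi> \<delta>}"
    by auto
  finally show ?thesis by (rule sym)
qed

lemma privacy_mechanism_set_pmf:
  assumes "privacy_mechanism_from R R' A Vs Q P" "uniform_Pi R R' Q"
    and "finite R" "finite R'" "card R = card R'" "(t, (\<pi>, \<delta>), t') \<in> set_pmf P"
  shows "t \<in> tables R A Vs" "t' \<in> tables R' A Vs" "\<pi> \<in> bijections R R'"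
    and "\<forall>s\<in>R. \<delta> t s = t' (\<pi> s)"
proof -
  show "t \<in> tables R A Vs" "t' \<in> tables R' A Vs" "\<forall>s\<in>R. \<delta> t s = t' (\<pi> s)"
    using assms(1,6) unfolding privacy_mechanism_from_def by fastforce+
  have "\<pi> \<in> set_pmf (map_pmf fst (map_pmf (\<lambda>(t, m, t'). m) P))"
    using assms(6) by force
  also have "map_pmf fst (map_pmf (\<lambda>(t, m, t'). m) P) = pmf_of_set (bijections R R')"
    using assms(1,2) unfolding privacy_mechanism_from_def uniform_Pi_def by simp
  finally show "\<pi> \<in> bijections R R'"
    using finite_bijections[OF assms(3,4)] bijections_nonempty[OF assms(3-5)] by simp
qed

lemma privacy_mechanism_prob_cell:
  assumes pm: "privacy_mechanism_from R R' A Vs Q P" and "uniform_Pi R R' Q"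
    and "finite R" "finite R'" "\<pi>\<^sub>0 \<in> bijections R R'"
  shows "measure_pmf.prob P {(t, (\<pi>, \<delta>), t'). t = \<tau> \<and> \<pi> = \<pi>\<^sub>0 \<and> \<delta> \<in> Z}
    = measure_pmf.prob P {(t, (\<pi>, \<delta>), t'). t = \<tau>} / card (bijections R R')
      * measure_pmf.prob Q {(\<pi>, \<delta>). \<delta> \<in> Z}"
proof -
  have "measure_pmf.prob P {(t, (\<pi>, \<delta>), t'). t \<in> {\<tau>} \<and> \<pi> \<in> {\<pi>\<^sub>0} \<and> \<delta> \<in> Z}
      = measure_pmf.prob P {(t, (\<pi>, \<delta>), t'). t \<in> {\<tau>}} * measure_pmf.prob P {(t, (\<pi>, \<delta>), t'). \<pi> \<in> {\<pi>\<^sub>0}}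
        * measure_pmf.prob P {(t, (\<pi>, \<delta>), t'). \<delta> \<in> Z}"
    by (rule pm[unfolded privacy_mechanism_from_def, THEN conjunct2, THEN conjunct1, rule_format])
  then have "measure_pmf.prob P {(t, (\<pi>, \<delta>), t'). t = \<tau> \<and> \<pi> = \<pi>\<^sub>0 \<and> \<delta> \<in> Z}
      = measure_pmf.prob P {(t, (\<pi>, \<delta>), t'). t = \<tau>} * measure_pmf.prob P {(t, (\<pi>, \<delta>), t'). \<pi> \<in> {\<pi>\<^sub>0}}
        * measure_pmf.prob P {(t, (\<pi>, \<delta>), t'). \<delta> \<in> Z}"
    by (simp only: singleton_iff)
  also have "measure_pmf.prob P {(t, (\<pi>, \<delta>), t'). \<pi> \<in> {\<pi>\<^sub>0}} = measure_pmf.prob Q {(\<pi>, \<delta>). \<pi> \<in> {\<pi>\<^sub>0}}"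
    by (rule privacy_mechanism_prob_mech[OF pm])
  also have "\<dots> = measure_pmf.prob (map_pmf fst Q) {\<pi>\<^sub>0}"
    by (simp add: vimage_def case_prod_unfold)
  also have "\<dots> = measure_pmf.prob (pmf_of_set (bijections R R')) {\<pi>\<^sub>0}"
    using assms(2) unfolding uniform_Pi_def by simp
  also have "\<dots> = 1 / card (bijections R R')"
    using assms(5) finite_bijections[OF assms(3,4)] by (subst measure_pmf_of_set) auto
  also have "measure_pmf.prob P {(t, (\<pi>, \<delta>), t'). \<delta> \<in> Z} = measure_pmf.prob Q {(\<pi>, \<delta>). \<delta> \<in> Z}"
    by (rule privacy_mechanism_prob_mech[OF pm])
  finally show ?thesis by (simp only: times_divide_eq_right mult_1_right)
qed

lemma privacy_mechanism_prob_output: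
  fixes \<tau>' :: "'r2 \<Rightarrow> 'a \<Rightarrow> 'v" and R :: "'r set"
  assumes pm: "privacy_mechanism_from R R' A Vs Q P" and uni: "uniform_Pi R R' Q"
    and fin: "finite R" "finite R'" "card R = card R'" "finite A" "\<forall>a\<in>A. finite (Vs a)"
    and \<tau>': "\<tau>' \<in> tables R' A Vs"
  shows "measure_pmf.prob P {(t, (\<pi>, \<delta>), t'). \<pi> \<in> Y \<and> t' = \<tau>'}
    = (\<Sum>\<tau>\<in>tables R A Vs. measure_pmf.prob P {(t, (\<pi>, \<delta>), t'). t = \<tau>} / card (bijections R R')
        * (\<Sum>\<pi>\<in>bijections R R' \<inter> Y. measure_pmf.prob Q {(\<pi>', \<delta>). \<forall>s\<in>R. \<delta> \<tau> s = \<tau>' (\<pi> s)}))"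
proof -
  define T where "T = tables R A Vs"
  define B where "B = bijections R R'"
  define cell where "cell = (\<lambda>(\<tau> :: 'r \<Rightarrow> 'a \<Rightarrow> 'v, \<pi>\<^sub>0). {(t, (\<pi>, \<delta>), t' :: 'r2 \<Rightarrow> 'a \<Rightarrow> 'v). t = \<tau> \<and> \<pi> = \<pi>\<^sub>0 \<and>
    \<delta> \<in> {\<delta>. \<forall>s\<in>R. \<delta> \<tau> s = \<tau>' (\<pi>\<^sub>0 s)}})"
  have finite_cells: "finite (T \<times> (B \<inter> Y))"
    using finite_tables[OF fin(1,4,5)] finite_bijections[OF fin(1,2)] unfolding T_def B_def by simp
  have "{(t, (\<pi>, \<delta>), t'). \<pi> \<in> Y \<and> t' = \<tau>'} \<inter> set_pmf P = (\<Union>c\<in>T \<times> (B \<inter> Y). cell c) \<inter> set_pmf P"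
  proof (intro set_eqI iffI)
    fix x assume "x \<in> {(t, (\<pi>, \<delta>), t'). \<pi> \<in> Y \<and> t' = \<tau>'} \<inter> set_pmf P"
    then obtain t \<pi> \<delta> where "x = (t, (\<pi>, \<delta>), \<tau>')" "\<pi> \<in> Y" "x \<in> set_pmf P" by auto
    with privacy_mechanism_set_pmf[OF pm uni fin(1-3)] show "x \<in> (\<Union>c\<in>T \<times> (B \<inter> Y). cell c) \<inter> set_pmf P"
      unfolding cell_def T_def B_def by fastforce
  next
    fix x assume "x \<in> (\<Union>c\<in>T \<times> (B \<inter> Y). cell c) \<inter> set_pmf P"
    then obtain t \<pi> \<delta> t' where x: "x = (t, (\<pi>, \<delta>), t')" "x \<in> set_pmf P" "\<pi> \<in> Y"
      and "\<forall>s\<in>R. \<delta> t s = \<tau>' (\<pi> s)" unfolding cell_def by auto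
    moreover note privacy_mechanism_set_pmf[OF pm uni fin(1-3) x(2)[unfolded x(1)]]
    ultimately show "x \<in> {(t, (\<pi>, \<delta>), t'). \<pi> \<in> Y \<and> t' = \<tau>'} \<inter> set_pmf P"
      using tables_eq_iff_comp_bijection[of t' R' A Vs \<tau>' \<pi> R] \<tau>' by auto
  qed
  then have "measure_pmf.prob P {(t, (\<pi>, \<delta>), t'). \<pi> \<in> Y \<and> t' = \<tau>'}
      = measure_pmf.prob P (\<Union>c\<in>T \<times> (B \<inter> Y). cell c)"
    by (metis (no_types) measure_Int_set_pmf[of P])
  also have "\<dots> = (\<Sum>c\<in>T \<times> (B \<inter> Y). measure_pmf.prob P (cell c))"
    using finite_cells by (intro measure_pmf.finite_measure_finite_Union)
      (auto simp: disjoint_family_on_def cell_def)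
  also have "\<dots> = (\<Sum>\<tau>\<in>T. \<Sum>\<pi>\<in>B \<inter> Y. measure_pmf.prob P {(t, (\<pi>, \<delta>), t'). t = \<tau>} / card B
      * measure_pmf.prob Q {(\<pi>', \<delta>). \<forall>s\<in>R. \<delta> \<tau> s = \<tau>' (\<pi> s)})"
    unfolding sum.cartesian_product' cell_def B_def prod.case
    by (intro sum.cong refl) (subst privacy_mechanism_prob_cell[OF pm uni fin(1,2)]; auto)
  finally show ?thesis
    unfolding T_def B_def by (simp add: sum_distrib_left)
qed

lemma cond_prob_pmf_le_inverse:
  assumes "0 < k" "k * measure_pmf.prob P (E \<inter> F) \<le> measure_pmf.prob P F"
  shows "cond_prob_pmf P E F \<le> 1 / k"
proof (cases "measure_pmf.prob P F = 0")
  case False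
  then have "0 < measure_pmf.prob P F" by (simp add: zero_less_measure_iff)
  with assms show ?thesis
    unfolding cond_prob_pmf_def by (simp add: pos_divide_le_eq field_simps)
qed (use assms in \<open>simp add: cond_prob_pmf_def\<close>)

lemma PRAM_privacy_mechanism_prob_le:
  assumes "finite R" "finite R'" "card R = card R'" "finite A" "\<forall>a\<in>A. finite (Vs a)"
    and "\<forall>a\<in>A. positive_transition_matrix (Vs a) (M a)"
    and "uniform_Pi R R' Q" "is_PRAM R A Vs M Q"
    and pm: "privacy_mechanism_from R R' A Vs Q P" and \<tau>': "\<tau>' \<in> tables R' A Vs" and "r \<in> R"
  shows "(1 + (real (card R) - 1) * (\<Prod>a\<in>A. AR (Vs a) (M a)))
      * measure_pmf.prob P ({(t, (\<pi>, \<delta>), t'). \<pi> r = r'} \<inter> {(t, (\<pi>, \<delta>), t'). t' = \<tau>'})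
    \<le> measure_pmf.prob P {(t, (\<pi>, \<delta>), t'). t' = \<tau>'}"
proof -
  define k where "k = 1 + (real (card R) - 1) * (\<Prod>a\<in>A. AR (Vs a) (M a))"
  define p where "p \<tau> = measure_pmf.prob P {(t, (\<pi>, \<delta>), t'). t = \<tau>} / card (bijections R R')" for \<tau>
  define w where "w \<tau> \<pi> = measure_pmf.prob Q {(\<pi>', \<delta>). \<forall>s\<in>R. \<delta> \<tau> s = \<tau>' (\<pi> s)}" for \<tau> \<pi>
  note output_prob = privacy_mechanism_prob_output[OF pm assms(7,1-5) \<tau>', folded p_def w_def]
  have "k * measure_pmf.prob P ({(t, (\<pi>, \<delta>), t'). \<pi> r = r'} \<inter> {(t, (\<pi>, \<delta>), t'). t' = \<tau>'})
      = (\<Sum>\<tau>\<in>tables R A Vs. p \<tau> * (k * (\<Sum>\<pi>\<in>{\<pi>\<in>bijections R R'. \<pi> r = r'}. w \<tau> \<pi>)))"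
    using output_prob[of "{\<pi>. \<pi> r = r'}"]
    by (simp add: sum_distrib_left mult_ac Int_def conj_commute split_def)
  also have "\<dots> \<le> (\<Sum>\<tau>\<in>tables R A Vs. p \<tau> * (\<Sum>\<pi>\<in>bijections R R'. w \<tau> \<pi>))"
    unfolding k_def w_def p_def using assms \<open>r \<in> R\<close>
    by (intro sum_mono mult_left_mono PRAM_prob_mapping_le) auto
  also have "\<dots> = measure_pmf.prob P {(t, (\<pi>, \<delta>), t'). t' = \<tau>'}"
    using output_prob[of UNIV] by simp
  finally show ?thesis unfolding k_def .
qed

theorem corollary4:
  fixes R :: "'r set" and R' :: "'r2 set" and A :: "'a set"
    and Vs :: "'a \<Rightarrow> 'v set" and M :: "'a \<Rightarrow> 'v \<Rightarrow> 'v \<Rightarrow> real"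
    and Q :: "('r,'r2,'a,'v) mech"
  assumes "finite R" and "finite R'" and "card R = card R'"
    and "finite A"
    and "\<forall>a\<in>A. finite (Vs a)"
    and "\<forall>a\<in>A. positive_transition_matrix (Vs a) (M a)"
    and "uniform_Pi R R' Q"
    and "is_PRAM R A Vs M Q"
  shows "Pk_anonymization R R' A Vs Q
           (1 + (real (card R) - 1) * (\<Prod>a\<in>A. AR (Vs a) (M a)))"
  unfolding Pk_anonymization_def Pk_anonymous_def
proof (intro ballI impI allI)
  fix \<tau>' P r r'
  assume \<tau>': "\<tau>' \<in> tables R' A Vs" and pm: "privacy_mechanism_from R R' A Vs Q P"
    and "r \<in> R" "r' \<in> R'"
  have "0 \<le> (\<Prod>a\<in>A. AR (Vs a) (M a))"
    using assms(5,6) \<tau>' \<open>r' \<in> R'\<close>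
    by (intro prod_nonneg less_imp_le AR_pos) (auto simp: tables_def positive_transition_matrix_def)
  moreover have "0 < card R"
    using \<open>r \<in> R\<close> assms(1) by (auto simp: card_gt_0_iff)
  ultimately have "0 < 1 + (real (card R) - 1) * (\<Prod>a\<in>A. AR (Vs a) (M a))"
    by (simp add: add_pos_nonneg mult_nonneg_nonneg)
  then show "cond_prob_pmf P {(t, (\<pi>, \<delta>), t'). \<pi> r = r'} {(t, (\<pi>, \<delta>), t'). t' = \<tau>'}
      \<le> 1 / (1 + (real (card R) - 1) * (\<Prod>a\<in>A. AR (Vs a) (M a)))"
    using PRAM_privacy_mechanism_prob_le[OF assms pm \<tau>' \<open>r \<in> R\<close>] by (rule cond_prob_pmf_le_inverse)
qed

end
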